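(* Let $X$ be an infinite dimensional real Banach space and let $E \subset X^\ast$ be a weak$^\ast$-closed and bounded set having no vector of maximum length, i.e. there is no $e\in E$ with $\|e\|=\sup\{\|e'\|: e'\in E\}$. Then the weak$^\ast$-closed convex hull $K$ of $E$ has no vector of maximum length, i.e. there is no $k\in K$ with $\|k\|=\sup\{\|k'\|:k'\in K\}$. Equivalently: if $E$ is not remotal from a point $x^\ast\in X^\ast$, then neither is $K$.
   Context: For a bounded set $E$ in a Banach space $Z$ and $z\in Z$, let $D(z,E)=\sup\{\|z-e\|: e\in E\}$. $E$ is called remotal from $z$ if there exists $e_0\in E$ with $\|z-e_0\|=D(z,E)$ (such $e_0$ is a farthest point of $E$ from $z$); $E$ is remotal if it is remotal from every point of $Z$. The weak$^\ast$-closed convex hull of $E\subset X^\ast$ is the closure of the convex hull of $E$ in the weak$^\ast$ topology $\sigma(X^\ast,X)$. *)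

theory Defs
  imports "HOL-Analysis.Analysis"
begin

text \<open>The weak-star topology
  sigma(X*, X) is the initial topology induced by the evaluation maps, i.e. the
  pullback of the product (pointwise) topology on X \<Rightarrow> real along
  blinfun_apply.\<close>

definition weak_star_topology :: "('a::real_normed_vector \<Rightarrow>\<^sub>L real) topology" where
  "weak_star_topology =
     topology (\<lambda>U. \<exists>V::('a \<Rightarrow> real) set. open V \<and> U = blinfun_apply -` V)"

definition weak_star_closed_convex_hull ::
  "('a::real_normed_vector \<Rightarrow>\<^sub>L real) set \<Rightarrow> ('a \<Rightarrow>\<^sub>L real) set" where
  "weak_star_closed_convex_hull E = weak_star_topology closure_of (convex hull E)"

definition has_max_length_vector :: "'b::real_normed_vector set \<Rightarrow> bool" where
  "has_max_length_vector S \<longleftrightarrow> (\<exists>e\<in>S. norm e = (SUP e'\<in>S. norm e'))"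

end

theory Submission
  imports Defs
begin

(* Let r be the supremum of the norms on E and K the weak-star closed
   convex hull of E.  Every h in K lies below the support function of E,
   h y <= sup_{e in E} e y, because weak-star closed half-spaces are closed under
   convex combinations and weak-star limits; hence the norms on K are also bounded
   by r, and r is their supremum.  Suppose k in K had norm r.  Choose unit vectors
   y_j with k y_j > r - 4^-j.  Testing the support inequality at z = sum_{j<=J} 2^j y_j
   yields, for every J, some e in E with e y_j >= r - 3 * 2^-j for all j <= J.  By a
   Banach-Alaoglu type compactness argument (E embeds as a closed subset of a compact
   box in the product topology) a single g in E satisfies all these inequalities at
   once, so norm g >= r, i.e. g is a vector of maximum length in E.  The argument
   does not use that X is infinite dimensional (nor completeness of X). *)

section \<open>The weak-star topology\<close>

lemma weak_star_istopology:
  "istopology (\<lambda>U. \<exists>V::('a::real_normed_vector \<Rightarrow> real) set. open V \<and> U = blinfun_apply -` V)"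
  (is "istopology ?L")
  unfolding istopology_def
proof (intro conjI allI impI)
  fix S T :: "('a \<Rightarrow>\<^sub>L real) set"
  assume "?L S" "?L T"
  then obtain V W where "open V" "S = blinfun_apply -` V" "open W" "T = blinfun_apply -` W"
    by blast
  then show "?L (S \<inter> T)" by (intro exI[of _ "V \<inter> W"]) auto
next
  fix \<K> :: "('a \<Rightarrow>\<^sub>L real) set set"
  assume "\<forall>U\<in>\<K>. ?L U"
  then obtain g where g: "\<And>U. U \<in> \<K> \<Longrightarrow> open (g U) \<and> U = blinfun_apply -` g U"
    by metis
  show "?L (\<Union>\<K>)"
    by (intro exI[of _ "\<Union>(g ` \<K>)"] conjI) (use g in blast)+
qed

lemma openin_weak_star:
  "openin weak_star_topology U \<longleftrightarrow> (\<exists>V. open V \<and> U = blinfun_apply -` V)"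
  unfolding weak_star_topology_def
  by (subst topology_inverse'[OF weak_star_istopology]) (rule refl)

lemma topspace_weak_star: "topspace weak_star_topology = UNIV"
  unfolding topspace_def using openin_weak_star[of UNIV] by auto

lemma closedin_weak_star_preimage:
  assumes "closedin weak_star_topology E"
  obtains C where "closed C" "E = blinfun_apply -` C"
proof -
  obtain V where "open V" "UNIV - E = blinfun_apply -` V"
    using assms unfolding closedin_def topspace_weak_star openin_weak_star by blast
  then show ?thesis by (intro that[of "- V"]) (auto simp: closed_def)
qed

lemma closedin_weak_star_halfspace:
  "closedin weak_star_topology {h. blinfun_apply h y \<le> c}"
proof -
  have "open {g::'a\<Rightarrow>real. c < g y}"
    by (rule open_Collect_less) (auto intro: continuous_intros)
  moreover have "UNIV - {h. blinfun_apply h y \<le> c} = blinfun_apply -` {g. c < g y}" by auto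
  ultimately show ?thesis
    unfolding closedin_def topspace_weak_star openin_weak_star by (intro conjI exI) auto
qed

section \<open>Compactness of weak-star closed bounded sets\<close>

text \<open>Banach-Alaoglu: a weak-star closed norm-bounded set, viewed as a set of functions,
  is compact in the product topology, being a closed subset of a product of intervals.\<close>
lemma weak_star_closed_bounded_compact:
  fixes E :: "('a::real_normed_vector \<Rightarrow>\<^sub>L real) set"
  assumes cl: "closedin weak_star_topology E"
    and R: "\<And>e. e \<in> E \<Longrightarrow> norm e \<le> R"
  shows "compact (blinfun_apply ` E)"
proof -
  obtain C where C: "closed C" "E = blinfun_apply -` C"
    using cl by (rule closedin_weak_star_preimage)
  define S where "S = PiE UNIV (\<lambda>x::'a. {-R * norm x .. R * norm x})"
  define A where "A = C \<inter> {g::'a\<Rightarrow>real. \<forall>x z. g (x + z) = g x + g z}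
       \<inter> {g. \<forall>a x. g (a *\<^sub>R x) = a * g x}"
  have "compactin (product_topology (\<lambda>i. euclidean) UNIV) S"
    unfolding S_def compactin_PiE by auto
  then have cS: "compact S" by (simp add: euclidean_product_topology)
  have clA: "closed A"
    unfolding A_def
    by (intro closed_Int C(1) closed_Collect_all closed_Collect_eq continuous_on_add
        continuous_on_mult continuous_on_const continuous_on_product_coordinates)
  have image_eq: "blinfun_apply ` E = S \<inter> A"
  proof
    show "blinfun_apply ` E \<subseteq> S \<inter> A"
    proof clarify
      fix e assume e: "e \<in> E"
      have "\<bar>blinfun_apply e x\<bar> \<le> R * norm x" for x
        using norm_blinfun[of e x] R[OF e] by (simp add: order_trans mult_right_mono)
      then show "blinfun_apply e \<in> S \<inter> A"
        using e C(2) unfolding S_def A_def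
        by (auto simp: PiE_def abs_le_iff minus_le_iff blinfun.add_right blinfun.scaleR_right)
    qed
    show "S \<inter> A \<subseteq> blinfun_apply ` E"
    proof
      fix g assume g: "g \<in> S \<inter> A"
      have "bounded_linear g"
      proof (rule bounded_linear_intro[where K = R])
        show "g (x + z) = g x + g z" "g (r *\<^sub>R x) = r *\<^sub>R g x" for x z r
          using g unfolding A_def by auto
        show "norm (g x) \<le> norm x * R" for x
        proof -
          have "g x \<in> {-R * norm x .. R * norm x}" using g unfolding S_def by (auto simp: PiE_def)
          then show ?thesis by (simp add: abs_le_iff mult.commute)
        qed
      qed
      then have "blinfun_apply (Blinfun g) = g" by (rule bounded_linear_Blinfun_apply)
      moreover from this have "Blinfun g \<in> E" using g C(2) unfolding A_def by auto
      ultimately show "g \<in> blinfun_apply ` E" by (metis image_eqI)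
    qed
  qed
  show ?thesis unfolding image_eq using cS clA by (rule compact_Int_closed)
qed

lemma weak_star_compact_inequalities:
  fixes E :: "('a::real_normed_vector \<Rightarrow>\<^sub>L real) set"
    and y :: "nat \<Rightarrow> 'a" and c :: "nat \<Rightarrow> real"
  assumes cl: "closedin weak_star_topology E"
    and R: "\<And>e. e \<in> E \<Longrightarrow> norm e \<le> R"
    and fin: "\<And>J. \<exists>e\<in>E. \<forall>j\<le>J. c j \<le> blinfun_apply e (y j)"
  obtains e where "e \<in> E" "\<And>j. c j \<le> blinfun_apply e (y j)"
proof -
  define G where "G j = {g::'a\<Rightarrow>real. c j \<le> g (y j)}" for j
  have clG: "closed (G j)" for j
    unfolding G_def
    by (intro closed_Collect_le continuous_on_const continuous_on_product_coordinates)
  have "blinfun_apply ` E \<inter> \<Inter>(range G) \<noteq> {}"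
  proof (rule compact_imp_fip[OF weak_star_closed_bounded_compact[OF cl R]])
    show "closed T" if "T \<in> range G" for T using that clG by auto
    fix F assume F: "finite F" "F \<subseteq> range G"
    then obtain I where I: "finite I" "F = G ` I" by (meson finite_subset_image)
    then obtain J where "I \<subseteq> {..J}"
      using finite_nat_iff_bounded_le by (metis atMost_iff subsetI)
    moreover obtain e where "e \<in> E" "\<forall>j\<le>J. c j \<le> blinfun_apply e (y j)" using fin by blast
    ultimately have "blinfun_apply e \<in> blinfun_apply ` E \<inter> \<Inter>F"
      unfolding I(2) G_def by auto
    then show "blinfun_apply ` E \<inter> \<Inter>F \<noteq> {}" by blast
  qed
  then show ?thesis unfolding G_def by (auto intro: that)
qed

section \<open>Norms and support functions on the weak-star closed convex hull\<close>

lemma blinfun_apply_le_norm_bound: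
  fixes e :: "'a::real_normed_vector \<Rightarrow>\<^sub>L real"
  assumes "norm e \<le> r"
  shows "blinfun_apply e x \<le> r * norm x"
proof -
  have "blinfun_apply e x \<le> norm e * norm x" using norm_blinfun[of e x] by simp
  also have "\<dots> \<le> r * norm x" using assms by (simp add: mult_right_mono)
  finally show ?thesis .
qed

lemma weak_star_closed_convex_hull_superset: "E \<subseteq> weak_star_closed_convex_hull E"
  unfolding weak_star_closed_convex_hull_def
  by (rule order_trans[OF hull_subset closure_of_subset]) (simp add: topspace_weak_star)

lemma weak_star_closed_convex_hull_empty [simp]: "weak_star_closed_convex_hull {} = {}"
  unfolding weak_star_closed_convex_hull_def by simp

text \<open>Every element of the weak-star closed convex hull is dominated by the support
  function of E: the half-space below it is convex, weak-star closed and contains E.\<close>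
lemma weak_star_closed_convex_hull_support:
  fixes E :: "('a::real_normed_vector \<Rightarrow>\<^sub>L real) set"
  assumes bdd: "bdd_above ((\<lambda>e. blinfun_apply e y) ` E)"
    and h: "h \<in> weak_star_closed_convex_hull E"
  shows "blinfun_apply h y \<le> (SUP e\<in>E. blinfun_apply e y)"
proof -
  define H where "H = {h. blinfun_apply h y \<le> (SUP e\<in>E. blinfun_apply e y)}"
  have "E \<subseteq> H" unfolding H_def by (auto intro: cSUP_upper[OF _ bdd])
  moreover have "convex H"
    using convex_linear_vimage[OF bounded_linear.linear[OF blinfun.bounded_linear_left]
        convex_real_interval(2)]
    unfolding H_def by (simp add: vimage_def)
  ultimately have "convex hull E \<subseteq> H" by (rule hull_minimal)
  then have "weak_star_closed_convex_hull E \<subseteq> H"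
    unfolding weak_star_closed_convex_hull_def H_def
    by (rule closure_of_minimal) (rule closedin_weak_star_halfspace)
  with h show ?thesis unfolding H_def by blast
qed

lemma weak_star_closed_convex_hull_norm_le:
  fixes E :: "('a::real_normed_vector \<Rightarrow>\<^sub>L real) set"
  assumes r: "\<And>e. e \<in> E \<Longrightarrow> norm e \<le> r" and r0: "0 \<le> r"
    and h: "h \<in> weak_star_closed_convex_hull E"
  shows "norm h \<le> r"
proof (rule norm_blinfun_bound[OF r0])
  have E: "E \<noteq> {}" using h by auto
  have eval_le: "blinfun_apply e y \<le> r * norm y" if "e \<in> E" for e y
    using r[OF that] by (rule blinfun_apply_le_norm_bound)
  have support_le: "blinfun_apply h y \<le> r * norm y" for y
  proof -
    have "bdd_above ((\<lambda>e. blinfun_apply e y) ` E)"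
      using eval_le by (rule bdd_aboveI2)
    then have "blinfun_apply h y \<le> (SUP e\<in>E. blinfun_apply e y)"
      using h by (rule weak_star_closed_convex_hull_support)
    also have "\<dots> \<le> r * norm y" using E eval_le by (rule cSUP_least)
    finally show ?thesis .
  qed
  fix y
  show "norm (blinfun_apply h y) \<le> r * norm y"
    using support_le[of y] support_le[of "-y"] by (simp add: blinfun.minus_right abs_le_iff)
qed

lemma weak_star_closed_convex_hull_SUP_norm:
  fixes E :: "('a::real_normed_vector \<Rightarrow>\<^sub>L real) set"
  assumes "bounded E" "E \<noteq> {}"
  shows "(SUP h\<in>weak_star_closed_convex_hull E. norm h) = (SUP e\<in>E. norm e)"
proof -
  have bdd: "bdd_above (norm ` E)" using assms(1) by (simp add: bdd_above_norm)
  then have le: "norm e \<le> (SUP e\<in>E. norm e)" if "e \<in> E" for e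
    using that by (rule cSUP_upper2) simp
  obtain e0 where "e0 \<in> E" using assms(2) by blast
  then have nonneg: "0 \<le> (SUP e\<in>E. norm e)" using le norm_ge_zero order_trans by blast
  have hull_le: "norm h \<le> (SUP e\<in>E. norm e)"
    if "h \<in> weak_star_closed_convex_hull E" for h
    using le nonneg that by (rule weak_star_closed_convex_hull_norm_le)
  have hull_bdd: "bdd_above (norm ` weak_star_closed_convex_hull E)"
    using hull_le by (rule bdd_aboveI2)
  have hull_ne: "weak_star_closed_convex_hull E \<noteq> {}"
    using assms(2) weak_star_closed_convex_hull_superset by blast
  show ?thesis
  proof (rule antisym)
    show "(SUP h\<in>weak_star_closed_convex_hull E. norm h) \<le> (SUP e\<in>E. norm e)"
      using hull_ne hull_le by (rule cSUP_least)
    show "(SUP e\<in>E. norm e) \<le> (SUP h\<in>weak_star_closed_convex_hull E. norm h)"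
      using assms(2) hull_bdd weak_star_closed_convex_hull_superset
      by (rule cSUP_subset_mono) simp
  qed
qed

section \<open>Approximating a norm-attaining element of the hull from E\<close>

lemma blinfun_near_norm:
  fixes k :: "'a::real_normed_vector \<Rightarrow>\<^sub>L real"
  assumes "\<epsilon> > 0"
  obtains y where "norm y \<le> 1" "norm k - \<epsilon> < blinfun_apply k y"
proof (rule ccontr)
  note attains = that
  assume "\<not> thesis"
  then have below: "blinfun_apply k y \<le> norm k - \<epsilon>" if "norm y \<le> 1" for y
    using attains that by (meson not_less)
  have nonneg: "0 \<le> norm k - \<epsilon>" using below[of 0] by simp
  have "norm (blinfun_apply k y) \<le> (norm k - \<epsilon>) * norm y" for y
  proof (cases "y = 0")
    case False
    define u where "u = (1 / norm y) *\<^sub>R y"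
    have "norm u \<le> 1" "norm (-u) \<le> 1" using False unfolding u_def by simp_all
    then have "blinfun_apply k u \<le> norm k - \<epsilon>" "- blinfun_apply k u \<le> norm k - \<epsilon>"
      using below[of u] below[of "-u"] by (simp_all add: blinfun.minus_right)
    then have "\<bar>blinfun_apply k u\<bar> \<le> norm k - \<epsilon>" by simp
    moreover have "blinfun_apply k u = blinfun_apply k y / norm y"
      unfolding u_def by (simp add: blinfun.scaleR_right)
    ultimately show ?thesis using False by (simp add: divide_le_eq)
  qed simp
  then have "norm k \<le> norm k - \<epsilon>" by (rule norm_blinfun_bound[OF nonneg])
  with assms show False by simp
qed

lemma sum_half_powers: "(\<Sum>j\<le>J. (1/2::real)^j) = 2 - (1/2)^J"
  by (induction J) (simp_all add: field_simps)

text \<open>If k in the hull nearly attains r = sup of the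
  norms on E at the unit vectors y j (with error 4^-j), then testing the support inequality
  at the weighted sum of 2^j y j, j <= J, produces a single e in E that nearly attains r at
  all y j, j <= J (with error 3 * 2^-j): the weights force each deficit to be small.\<close>
lemma hull_norming_finite_stage:
  fixes E :: "('a::real_normed_vector \<Rightarrow>\<^sub>L real) set" and y :: "nat \<Rightarrow> 'a"
  assumes r: "\<And>e. e \<in> E \<Longrightarrow> norm e \<le> r" and E: "E \<noteq> {}"
    and k: "k \<in> weak_star_closed_convex_hull E"
    and y_unit: "\<And>j. norm (y j) \<le> 1"
    and k_near: "\<And>j. r - (1/4)^j < blinfun_apply k (y j)"
  shows "\<exists>e\<in>E. \<forall>j\<le>J. r - 3 * (1/2)^j \<le> blinfun_apply e (y j)"
proof -
  have eval_le: "blinfun_apply e x \<le> r * norm x" if "e \<in> E" for e x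
    using r[OF that] by (rule blinfun_apply_le_norm_bound)
  have bdd: "bdd_above ((\<lambda>e. blinfun_apply e x) ` E)" for x
    using eval_le by (rule bdd_aboveI2)
  define z where "z = (\<Sum>j\<le>J. (2::real)^j *\<^sub>R y j)"
  have apply_z: "blinfun_apply f z = (\<Sum>j\<le>J. (2::real)^j * blinfun_apply f (y j))" for f
    unfolding z_def by (simp add: blinfun.sum_right blinfun.scaleR_right)
  have "blinfun_apply k z - 1 < (SUP e\<in>E. blinfun_apply e z)"
    using weak_star_closed_convex_hull_support[OF bdd k, of z] by simp
  then obtain e where e: "e \<in> E" and e_z: "blinfun_apply k z - 1 < blinfun_apply e z"
    using less_cSUP_iff[OF E bdd] by blast
  text \<open>The weighted deficits of e at the y j are nonnegative and sum to less than 3.\<close>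
  define d where "d j = 2^j * (r - blinfun_apply e (y j))" for j
  have d_nonneg: "0 \<le> d j" for j
  proof -
    have "blinfun_apply e (y j) \<le> r * norm (y j)" using eval_le[OF e] .
    also have "\<dots> \<le> r"
      using y_unit[of j] order_trans[OF norm_ge_zero r[OF e]] by (rule mult_left_le)
    finally show ?thesis unfolding d_def by simp
  qed
  have k_deficit: "2^j * (r - blinfun_apply k (y j)) \<le> (1/2::real)^j" for j
  proof -
    have "2^j * (r - blinfun_apply k (y j)) \<le> (2::real)^j * (1/4)^j"
      using k_near[of j] by (intro mult_left_mono) auto
    also have "\<dots> = (1/2)^j" by (simp add: power_mult_distrib[symmetric])
    finally show ?thesis .
  qed
  have "(\<Sum>j\<le>J. d j) = (\<Sum>j\<le>J. 2^j * r) - blinfun_apply e z"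
    unfolding d_def apply_z by (simp add: right_diff_distrib sum_subtractf)
  also have "\<dots> < (\<Sum>j\<le>J. 2^j * r) - blinfun_apply k z + 1" using e_z by simp
  also have "\<dots> = (\<Sum>j\<le>J. 2^j * (r - blinfun_apply k (y j))) + 1"
    unfolding apply_z by (simp add: right_diff_distrib sum_subtractf)
  also have "\<dots> \<le> (\<Sum>j\<le>J. (1/2::real)^j) + 1" using k_deficit by (simp add: sum_mono)
  also have "\<dots> \<le> 3" unfolding sum_half_powers by simp
  finally have d_sum: "(\<Sum>j\<le>J. d j) < 3" .
  have "r - 3 * (1/2)^j \<le> blinfun_apply e (y j)" if "j \<le> J" for j
  proof -
    have "d j \<le> (\<Sum>j\<le>J. d j)" using that d_nonneg by (intro member_le_sum) auto
    with d_sum have "2^j * (r - blinfun_apply e (y j)) \<le> 3" unfolding d_def by simp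
    then have "r - blinfun_apply e (y j) \<le> 3 / 2^j" by (simp add: le_divide_eq mult.commute)
    then show ?thesis by (simp add: power_divide)
  qed
  with e show ?thesis by blast
qed

lemma ge_of_geometric_lower_bounds:
  fixes r x c :: real
  assumes "\<And>j. r - c * (1/2)^j \<le> x"
  shows "r \<le> x"
proof (rule LIMSEQ_le_const2)
  show "(\<lambda>j. r - c * (1/2)^j) \<longlonglongrightarrow> r"
    using tendsto_diff[OF tendsto_const tendsto_mult[OF tendsto_const LIMSEQ_power_zero[of "1/2::real"]]]
    by simp
qed (use assms in blast)

theorem theorem1:
  fixes E :: "('a::banach \<Rightarrow>\<^sub>L real) set"
  assumes inf_dim: "\<not> (\<exists>B::'a set. finite B \<and> span B = UNIV)"
    and wclosed: "closedin weak_star_topology E"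
    and bdd: "bounded E"
    and nomax: "\<not> has_max_length_vector E"
  shows "\<not> has_max_length_vector (weak_star_closed_convex_hull E)"
proof
  assume "has_max_length_vector (weak_star_closed_convex_hull E)"
  then obtain k where k: "k \<in> weak_star_closed_convex_hull E"
    and k_max: "norm k = (SUP h\<in>weak_star_closed_convex_hull E. norm h)"
    unfolding has_max_length_vector_def by blast
  define r where "r = (SUP e\<in>E. norm e)"
  have E_ne: "E \<noteq> {}" using k by auto
  have r_bound: "norm e \<le> r" if "e \<in> E" for e
    unfolding r_def using bdd that by (intro cSUP_upper) (simp_all add: bdd_above_norm)
  have "norm k = r"
    using k_max weak_star_closed_convex_hull_SUP_norm[OF bdd E_ne] unfolding r_def by simp
  then have "\<forall>j. \<exists>x. norm x \<le> 1 \<and> r - (1/4)^j < blinfun_apply k x"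
    using blinfun_near_norm[of "(1/4)^_" k] by auto
  then obtain y where "\<forall>j. norm (y j) \<le> 1 \<and> r - (1/4)^j < blinfun_apply k (y j)"
    by (rule choice[THEN exE])
  then have y_unit: "\<And>j. norm (y j) \<le> 1"
    and k_near: "\<And>j. r - (1/4)^j < blinfun_apply k (y j)" by auto
  obtain g where g: "g \<in> E" and g_near: "\<And>j. r - 3 * (1/2)^j \<le> blinfun_apply g (y j)"
    using weak_star_compact_inequalities[OF wclosed r_bound
        hull_norming_finite_stage[OF r_bound E_ne k y_unit k_near]] by blast
  have "blinfun_apply g (y j) \<le> norm g" for j
    using blinfun_apply_le_norm_bound[of g "norm g" "y j"] mult_left_le[OF y_unit[of j] norm_ge_zero[of g]]
    by linarith
  then have "r \<le> norm g"
    using g_near by (intro ge_of_geometric_lower_bounds[of r 3]) (rule order_trans)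
  then have "norm g = (SUP e\<in>E. norm e)" using r_bound[OF g] unfolding r_def by simp
  with g nomax show False unfolding has_max_length_vector_def by blast
qed

end
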